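(* Let $M=(Q,P,\Sigma,\Delta,q_0,R,h)$ be a nondeleting mttr. Let $q\in Q$, $\sigma\in\Sigma^{(k)}$ with $k\ge 1$, $y\in Y$, and $p,p_1,\dots,p_k\in P$ such that $p=h_\sigma(p_1,\dots,p_k)$ and $L_{p_j}\neq\emptyset$ for every $j\in[k]$. Let $\zeta=\mathrm{rhs}_M(q,\sigma,\langle p_1,\dots,p_k\rangle)$. Suppose that $\mathrm{pout}_M((q,y),p)$ is finite and that a symbol $\langle r,x_i\rangle$ (with $i\in[k]$ and $r\in Q^{(m)}$) occurs in $\lfloor\zeta\rfloor_y$ at node $u$. Then for every $l\in[m]$ such that the node $ul$ of $\lfloor\zeta\rfloor_y$ is not labeled $\$$, the set $\mathrm{pout}_M((r,y_l),p_i)$ is finite.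
   Context: Trees: for a ranked alphabet $\Sigma$, $T_\Sigma$ is the set of finite ranked ordered trees over $\Sigma$, and $T_\Sigma(A)$ the trees over $\Sigma$ with additional rank-0 symbols from $A$. Nodes are addressed by Dewey paths: $\varepsilon$ is the root and $ui$ is the $i$-th child of $u$; $s[u]$ is the label and $s/u$ the subtree at $u$. $X_k=\{x_1,\dots,x_k\}$ are input variables and $Y=\{y_1,y_2,\dots\}$, $Y_m=\{y_1,\dots,y_m\}$ are parameters. A (deterministic bottom-up) tree automaton $(P,\Sigma,h)$ has a finite state set $P$ and maps $h_\sigma:P^k\to P$ for $\sigma\in\Sigma^{(k)}$; $\hat h:T_\Sigma\to P$ is its run, $\hat h(\sigma(s_1,\dots,s_k))=h_\sigma(\hat h(s_1),\dots,\hat h(s_k))$, and $L_p=\{s\in T_\Sigma\mid \hat h(s)=p\}$. A (total, deterministic) macro tree transducer with look-ahead (mttr) is $M=(Q,P,\Sigma,\Delta,q_0,R,h)$ where $Q$ is a ranked alphabet of states, $\Sigma,\Delta$ are ranked input/output alphabets, $(P,\Sigma,h)$ is a tree automaton (the look-ahead), $q_0\in Q^{(0)}$, and for each $q\in Q^{(m)}$, $\sigma\in\Sigma^{(k)}$, $p_1,\dots,p_k\in P$ there is exactly one rule $\langle q,\sigma(x_1:p_1,\dots,x_k:p_k)\rangle(y_1,\dots,y_m)\to t$ with $t=\mathrm{rhs}_M(q,\sigma,\langle p_1,\dots,p_k\rangle)\in T_{\Delta\cup\langle Q,X_k\rangle}(Y_m)$, where the symbol $\langle q',x_i\rangle$ has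 the rank of $q'$. For $q\in Q^{(m)}$ and $s=\sigma(s_1,\dots,s_k)\in T_\Sigma$, the $q$-translation $M_q(s)\in T_\Delta(Y_m)$ is obtained from $\mathrm{rhs}_M(q,\sigma,\langle \hat h(s_1),\dots,\hat h(s_k)\rangle)$ by replacing (recursively, innermost first) each subtree $\langle q',x_i\rangle(\xi_1,\dots,\xi_n)$ by $M_{q'}(s_i)$ with each $y_j$ replaced by (the result for) $\xi_j$; $M(s)=M_{q_0}(s)$. $M$ is nondeleting if in every rule with left-hand state of rank $m$ each parameter $y_1,\dots,y_m$ occurs in the right-hand side. Least common output form: for $Y'\subseteq Y$ and $s\in T_{\Delta\cup\langle Q,X\rangle}(Y)$, $\lfloor s\rfloor_{Y'}$ is the tree obtained from $s$ by replacing every maximal subtree containing no parameter from $Y'$ by a new rank-0 symbol $\$$ (i.e., $\lfloor y\rfloor_{Y'}=y$ for $y\in Y'$; $\lfloor\delta(s_1,\dots,s_n)\rfloor_{Y'}=\delta(\lfloor s_1\rfloor_{Y'},\dots,\lfloor s_n\rfloor_{Y'})$ if $s$ contains a parameter of $Y'$; otherwise $\$$). Write $\lfloor s\rfloor_y$ for $\lfloor s\rfloor_{\{y\}}$. For $q\in Q$, $p\in P$: $\mathrm{pout}_M((q,Y'),p)=\{\lfloor M_q(s)\rfloor_{Y'}\mid s\in L_p\}$ and $\mathrm{pout}_M((q,y),p)=\mathrm{pout}_M((q,\{y\}),p)$. *)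

theory Defs
  imports Main
begin

datatype 'a tree = Node 'a "'a tree list"

fun subtree_at :: "'a tree \<Rightarrow> nat list \<Rightarrow> 'a tree option" where
  "subtree_at t [] = Some t"
| "subtree_at (Node a ts) (i # u) =
     (if 1 \<le> i \<and> i \<le> length ts then subtree_at (ts ! (i - 1)) u else None)"

definition label_at :: "'a tree \<Rightarrow> nat list \<Rightarrow> 'a option" where
  "label_at t u = map_option (\<lambda>s. case s of Node a _ \<Rightarrow> a) (subtree_at t u)"

text \<open>Out g: output symbol; Call q i: the symbol <q, x_i>; Par j: parameter y_j;
  Dollar: the special rank-0 symbol used in least common output forms.\<close>
datatype ('q, 'g) rlab = Out 'g | Call 'q nat | Par nat | Dollar

record ('q, 'p, 'f, 'g) mttr =
  states :: "'q set"
  rkQ    :: "'q \<Rightarrow> nat"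
  lstates :: "'p set"
  inp    :: "'f set"
  rkI    :: "'f \<Rightarrow> nat"
  outp   :: "'g set"
  rkO    :: "'g \<Rightarrow> nat"
  init   :: 'q
  rhs    :: "'q \<Rightarrow> 'f \<Rightarrow> 'p list \<Rightarrow> ('q, 'g) rlab tree"
  la     :: "'f \<Rightarrow> 'p list \<Rightarrow> 'p"

text \<open>Right-hand sides: trees in T_{Delta \<union> <Q,X_k>}(Y_m).\<close>
fun wf_rhs :: "('q, 'p, 'f, 'g) mttr \<Rightarrow> nat \<Rightarrow> nat \<Rightarrow> ('q, 'g) rlab tree \<Rightarrow> bool" where
  "wf_rhs M k m (Node a ts) =
     ((case a of
         Out g \<Rightarrow> g \<in> outp M \<and> length ts = rkO M g
       | Call q i \<Rightarrow> q \<in> states M \<and> 1 \<le> i \<and> i \<le> k \<and> length ts = rkQ M q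
       | Par j \<Rightarrow> 1 \<le> j \<and> j \<le> m \<and> ts = []
       | Dollar \<Rightarrow> False)
      \<and> (\<forall>t \<in> set ts. wf_rhs M k m t))"

definition valid_la_args :: "('q, 'p, 'f, 'g) mttr \<Rightarrow> 'f \<Rightarrow> 'p list \<Rightarrow> bool" where
  "valid_la_args M \<sigma> ps \<longleftrightarrow> length ps = rkI M \<sigma> \<and> set ps \<subseteq> lstates M"

definition wf_mttr :: "('q, 'p, 'f, 'g) mttr \<Rightarrow> bool" where
  "wf_mttr M \<longleftrightarrow>
     finite (states M) \<and> finite (lstates M) \<and> finite (inp M) \<and> finite (outp M)
   \<and> init M \<in> states M \<and> rkQ M (init M) = 0
   \<and> (\<forall>\<sigma> \<in> inp M. \<forall>ps. valid_la_args M \<sigma> ps \<longrightarrow> la M \<sigma> ps \<in> lstates M)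
   \<and> (\<forall>q \<in> states M. \<forall>\<sigma> \<in> inp M. \<forall>ps. valid_la_args M \<sigma> ps \<longrightarrow>
         wf_rhs M (rkI M \<sigma>) (rkQ M q) (rhs M q \<sigma> ps))"

fun occurs_par :: "nat \<Rightarrow> ('q, 'g) rlab tree \<Rightarrow> bool" where
  "occurs_par j (Node a ts) = (a = Par j \<or> (\<exists>t \<in> set ts. occurs_par j t))"

definition nondeleting :: "('q, 'p, 'f, 'g) mttr \<Rightarrow> bool" where
  "nondeleting M \<longleftrightarrow>
     (\<forall>q \<in> states M. \<forall>\<sigma> \<in> inp M. \<forall>ps. valid_la_args M \<sigma> ps \<longrightarrow>
        (\<forall>j. 1 \<le> j \<and> j \<le> rkQ M q \<longrightarrow> occurs_par j (rhs M q \<sigma> ps)))"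

fun wf_in :: "('q, 'p, 'f, 'g) mttr \<Rightarrow> 'f tree \<Rightarrow> bool" where
  "wf_in M (Node \<sigma> ss) = (\<sigma> \<in> inp M \<and> length ss = rkI M \<sigma> \<and> (\<forall>s \<in> set ss. wf_in M s))"

primrec run :: "('q, 'p, 'f, 'g) mttr \<Rightarrow> 'f tree \<Rightarrow> 'p" where
  "run M (Node \<sigma> ss) = la M \<sigma> (map (run M) ss)"

definition Lang :: "('q, 'p, 'f, 'g) mttr \<Rightarrow> 'p \<Rightarrow> 'f tree set" where
  "Lang M p = {s. wf_in M s \<and> run M s = p}"

primrec psubst :: "('q, 'g) rlab tree list \<Rightarrow> ('q, 'g) rlab tree \<Rightarrow> ('q, 'g) rlab tree" where
  "psubst args (Node a ts) =
     (case a of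
        Par j \<Rightarrow> (if 1 \<le> j \<and> j \<le> length args then args ! (j - 1) else Node a (map (psubst args) ts))
      | _ \<Rightarrow> Node a (map (psubst args) ts))"

text \<open>Evaluate a right-hand side, given the translations of the children:
  tr q' i = M_{q'}(s_i).\<close>
primrec eval_rhs :: "('q \<Rightarrow> nat \<Rightarrow> ('q, 'g) rlab tree) \<Rightarrow> ('q, 'g) rlab tree \<Rightarrow> ('q, 'g) rlab tree" where
  "eval_rhs tr (Node a ts) =
     (case a of
        Call q' i \<Rightarrow> psubst (map (eval_rhs tr) ts) (tr q' i)
      | _ \<Rightarrow> Node a (map (eval_rhs tr) ts))"

primrec translate :: "('q, 'p, 'f, 'g) mttr \<Rightarrow> 'f tree \<Rightarrow> 'q \<Rightarrow> ('q, 'g) rlab tree" where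
  "translate M (Node \<sigma> ss) =
     (\<lambda>q. eval_rhs
            (\<lambda>q' i. if 1 \<le> i \<and> i \<le> length ss then (map (translate M) ss ! (i - 1)) q'
                    else Node Dollar [])
            (rhs M q \<sigma> (map (run M) ss)))"

fun has_par_in :: "nat set \<Rightarrow> ('q, 'g) rlab tree \<Rightarrow> bool" where
  "has_par_in Y' (Node a ts) = ((\<exists>j \<in> Y'. a = Par j) \<or> (\<exists>t \<in> set ts. has_par_in Y' t))"

fun lcof :: "nat set \<Rightarrow> ('q, 'g) rlab tree \<Rightarrow> ('q, 'g) rlab tree" where
  "lcof Y' (Node a ts) =
     (if has_par_in Y' (Node a ts) then Node a (map (lcof Y') ts) else Node Dollar [])"

definition pout :: "('q, 'p, 'f, 'g) mttr \<Rightarrow> 'q \<Rightarrow> nat set \<Rightarrow> 'p \<Rightarrow> ('q, 'g) rlab tree set" where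
  "pout M q Y' p = {lcof Y' (translate M s q) | s. s \<in> Lang M p}"

end

theory Submission imports Defs begin

text \<open>Choose an input tree \<open>\<sigma>(s\<^sub>1,\<dots>,s\<^sub>k)\<close> in \<open>L\<^sub>p\<close> whose \<open>i\<close>-th child ranges
  over \<open>L\<^bsub>p\<^sub>i\<^esub>\<close>. Since \<open>M\<close> is nondeleting, the parameter \<open>y\<^sub>l\<close> of \<open>M\<^sub>r(s\<^sub>i)\<close> is
  replaced by the translation of the \<open>l\<close>-th argument of \<open>\<langle>r,x\<^sub>i\<rangle>\<close>, and that translation
  contains \<open>y\<close> because node \<open>ul\<close> is not \<open>$\<close>. Hence \<open>\<lfloor>M\<^sub>r(s\<^sub>i)\<rfloor>\<^bsub>y\<^sub>l\<^esub>\<close> agrees with a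
  subtree of \<open>\<lfloor>M\<^sub>q(\<sigma>(s\<^sub>1,\<dots>,s\<^sub>k))\<rfloor>\<^sub>y\<close> except that some of its subtrees are cut down to
  \<open>$\<close> or \<open>y\<^sub>l\<close>. The finitely many trees in \<open>pout\<^sub>M((q,y),p)\<close> have finitely many subtrees,
  and each tree admits only finitely many such abstractions.\<close>

inductive abstracts :: "nat \<Rightarrow> ('q, 'g) rlab tree \<Rightarrow> ('q, 'g) rlab tree \<Rightarrow> bool" for l where
  abstracts_Dollar: "abstracts l (Node Dollar []) B"
| abstracts_Par: "abstracts l (Node (Par l) []) B"
| abstracts_Node: "list_all2 (abstracts l) as bs \<Longrightarrow> abstracts l (Node a as) (Node a bs)"

lemma finite_abstracts: "finite {A. abstracts l A B}"
proof (induction B)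
  case (Node b bs)
  let ?U = "\<Union>B\<in>set bs. {A. abstracts l A B}"
  have "{A. abstracts l A (Node b bs)} \<subseteq>
      {Node Dollar [], Node (Par l) []} \<union> Node b ` {as. set as \<subseteq> ?U \<and> length as = length bs}"
  proof
    fix A assume "A \<in> {A. abstracts l A (Node b bs)}"
    then have "abstracts l A (Node b bs)" by simp
    then show "A \<in> {Node Dollar [], Node (Par l) []} \<union> Node b ` {as. set as \<subseteq> ?U \<and> length as = length bs}"
    proof cases
      case (abstracts_Node as)
      then have "set as \<subseteq> ?U"
        by (auto simp: list_all2_conv_all_nth in_set_conv_nth) (metis nth_mem)
      with abstracts_Node show ?thesis
        by (auto dest: list_all2_lengthD)
    qed auto
  qed
  moreover have "finite {as. set as \<subseteq> ?U \<and> length as = length bs}"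
    by (rule finite_lists_length_eq) (use Node in auto)
  ultimately show ?case
    by (meson finite.emptyI finite_Un finite_imageI finite_insert finite_subset)
qed

definition subtrees :: "'a tree \<Rightarrow> 'a tree set" where
  "subtrees T = {B. \<exists>v. subtree_at T v = Some B}"

lemma subtrees_Node: "subtrees (Node a ts) = insert (Node a ts) (\<Union>t\<in>set ts. subtrees t)"
proof -
  have "(\<exists>v. subtree_at (Node a ts) v = Some B) \<longleftrightarrow>
      B = Node a ts \<or> (\<exists>n<length ts. \<exists>v. subtree_at (ts ! n) v = Some B)" for B
  proof
    assume "\<exists>v. subtree_at (Node a ts) v = Some B"
    then obtain v where "subtree_at (Node a ts) v = Some B" by blast
    then show "B = Node a ts \<or> (\<exists>n<length ts. \<exists>v. subtree_at (ts ! n) v = Some B)"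
      by (cases v) (auto split: if_splits intro!: exI[of _ "_ - 1"])
  next
    assume "B = Node a ts \<or> (\<exists>n<length ts. \<exists>v. subtree_at (ts ! n) v = Some B)"
    then show "\<exists>v. subtree_at (Node a ts) v = Some B"
    proof
      assume "\<exists>n<length ts. \<exists>v. subtree_at (ts ! n) v = Some B"
      then obtain n v where "n < length ts" and "subtree_at (ts ! n) v = Some B"
        by blast
      then have "subtree_at (Node a ts) (Suc n # v) = Some B"
        by simp
      then show ?thesis ..
    qed (auto intro: exI[of _ "[]"])
  qed
  then show ?thesis
    unfolding subtrees_def by (auto simp: in_set_conv_nth) (metis nth_mem)
qed

lemma self_in_subtrees: "t \<in> subtrees t"
proof -
  have "subtree_at t [] = Some t"
    by simp
  then show ?thesis
    unfolding subtrees_def by blast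
qed

lemma child_in_subtrees: "t \<in> set ts \<Longrightarrow> t \<in> subtrees (Node a ts)"
  using self_in_subtrees[of t] by (auto simp: subtrees_Node)

lemma finite_subtrees: "finite (subtrees T)"
  by (induction T) (auto simp: subtrees_Node)

lemma finite_if_abstracts_subtree:
  assumes "finite F" and "\<And>A. A \<in> S \<Longrightarrow> \<exists>T\<in>F. \<exists>B\<in>subtrees T. abstracts l A B"
  shows "finite S"
proof (rule finite_subset)
  show "S \<subseteq> (\<Union>T\<in>F. \<Union>B\<in>subtrees T. {A. abstracts l A B})"
    using assms(2) by blast
  show "finite (\<Union>T\<in>F. \<Union>B\<in>subtrees T. {A. abstracts l A B})"
    using assms(1) finite_subtrees finite_abstracts by blast
qed

lemma subtree_at_append:
  "subtree_at t (w @ v) = Option.bind (subtree_at t w) (\<lambda>t'. subtree_at t' v)"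
  by (induction t w rule: subtree_at.induct) auto

lemma subtree_at_Cons_SomeE:
  assumes "subtree_at (Node a ts) (n # v) = Some t"
  obtains "ts ! (n - 1) \<in> set ts" and "1 \<le> n" and "n \<le> length ts"
    and "subtree_at (ts ! (n - 1)) v = Some t"
  using assms by (simp split: if_splits)

lemma subtrees_trans:
  assumes "B \<in> subtrees A" and "C \<in> subtrees B"
  shows "C \<in> subtrees A"
proof -
  obtain v w where "subtree_at A v = Some B" and "subtree_at B w = Some C"
    using assms unfolding subtrees_def by blast
  then have "subtree_at A (v @ w) = Some C"
    by (simp add: subtree_at_append)
  then show ?thesis
    unfolding subtrees_def by blast
qed

fun params_leaves :: "('q, 'g) rlab tree \<Rightarrow> bool" where
  "params_leaves (Node a ts) = ((\<forall>j. a = Par j \<longrightarrow> ts = []) \<and> (\<forall>t\<in>set ts. params_leaves t))"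

lemma wf_rhs_params_leaves: "wf_rhs M k m z \<Longrightarrow> params_leaves z"
  by (induction z) (auto split: rlab.splits)

lemma params_leaves_psubst:
  "params_leaves t \<Longrightarrow> \<forall>a\<in>set args. params_leaves a \<Longrightarrow> params_leaves (psubst args t)"
  by (induction t) (auto split: rlab.splits)

lemma psubst_Node_nonpar: "\<forall>j. a \<noteq> Par j \<Longrightarrow> psubst args (Node a ts) = Node a (map (psubst args) ts)"
  by (cases a) auto

lemma lcof_no_par: "\<not> has_par_in Y t \<Longrightarrow> lcof Y t = Node Dollar []"
  by (cases t) auto

lemma has_par_in_psubst:
  assumes "params_leaves t" and "has_par_in {j} t" and "1 \<le> j" and "j \<le> length args"
    and "has_par_in Y (args ! (j - 1))"
  shows "has_par_in Y (psubst args t)"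
  using assms
proof (induction t)
  case (Node a ts)
  show ?case
  proof (cases "a = Par j")
    case True
    with Node.prems show ?thesis by simp
  next
    case False
    then obtain c where c: "c \<in> set ts" "has_par_in {j} c"
      using Node.prems by auto
    then have "\<forall>j'. a \<noteq> Par j'"
      using Node.prems by auto
    note ps = psubst_Node_nonpar[OF this, of args ts]
    have "has_par_in Y (psubst args c)"
      using Node.IH c Node.prems by simp
    with c(1) show ?thesis
      unfolding ps by auto
  qed
qed

lemma lcof_arg_in_subtrees_lcof_psubst:
  assumes "params_leaves t" and "has_par_in {j} t" and "1 \<le> j" and "j \<le> length args"
    and "has_par_in Y (args ! (j - 1))"
  shows "lcof Y (args ! (j - 1)) \<in> subtrees (lcof Y (psubst args t))"
  using assms
proof (induction t)
  case (Node a ts)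
  show ?case
  proof (cases "a = Par j")
    case True
    with Node.prems show ?thesis
      by (simp add: self_in_subtrees)
  next
    case False
    then obtain c where c: "c \<in> set ts" "has_par_in {j} c"
      using Node.prems by auto
    then have "\<forall>j'. a \<noteq> Par j'"
      using Node.prems by auto
    note ps = psubst_Node_nonpar[OF this, of args ts]
    have "has_par_in Y (psubst args (Node a ts))"
      using has_par_in_psubst[OF Node.prems] .
    then have "lcof Y (psubst args (Node a ts)) = Node a (map (lcof Y \<circ> psubst args) ts)"
      unfolding ps by simp
    moreover have "lcof Y (args ! (j - 1)) \<in> subtrees (lcof Y (psubst args c))"
      using Node.IH c Node.prems by simp
    ultimately show ?thesis
      using c by (auto simp: subtrees_Node)
  qed
qed

lemma abstracts_lcof_psubst:
  assumes "params_leaves t" and "1 \<le> l" and "l \<le> length args" and "has_par_in Y (args ! (l - 1))"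
  shows "abstracts l (lcof {l} t) (lcof Y (psubst args t))"
  using assms
proof (induction t)
  case (Node a ts)
  show ?case
  proof (cases "has_par_in {l} (Node a ts)")
    case False
    then show ?thesis by (simp add: abstracts_Dollar)
  next
    case has_l: True
    show ?thesis
    proof (cases "\<exists>j. a = Par j")
      case True
      with has_l Node.prems(1) show ?thesis
        by (auto simp: abstracts_Par)
    next
      case False
      then have "\<forall>j. a \<noteq> Par j"
        by simp
      note ps = psubst_Node_nonpar[OF this, of args ts]
      have "has_par_in Y (psubst args (Node a ts))"
        using has_par_in_psubst[OF Node.prems(1) has_l Node.prems(2-4)] .
      then have "lcof Y (psubst args (Node a ts)) = Node a (map (lcof Y \<circ> psubst args) ts)"
        unfolding ps by simp
      moreover have "abstracts l (lcof {l} c) (lcof Y (psubst args c))" if "c \<in> set ts" for c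
        using Node.IH that Node.prems by simp
      ultimately show ?thesis
        using has_l by (auto intro!: abstracts_Node simp: list_all2_conv_all_nth)
    qed
  qed
qed

text \<open>\<open>tr q i\<close> stands for the translation \<open>M\<^sub>q(s\<^sub>i)\<close> of the \<open>i\<close>-th input child.\<close>

definition nondeleting_table :: "('q, 'p, 'f, 'g) mttr \<Rightarrow> nat \<Rightarrow> ('q \<Rightarrow> nat \<Rightarrow> ('q, 'g) rlab tree) \<Rightarrow> bool" where
  "nondeleting_table M k tr \<longleftrightarrow>
     (\<forall>q\<in>states M. \<forall>i. 1 \<le> i \<and> i \<le> k \<longrightarrow> params_leaves (tr q i) \<and>
        (\<forall>j. 1 \<le> j \<and> j \<le> rkQ M q \<longrightarrow> has_par_in {j} (tr q i)))"

lemma params_leaves_eval_rhs: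
  "wf_rhs M k m z \<Longrightarrow> (\<And>q i. q \<in> states M \<Longrightarrow> 1 \<le> i \<Longrightarrow> i \<le> k \<Longrightarrow> params_leaves (tr q i))
   \<Longrightarrow> params_leaves (eval_rhs tr z)"
proof (induction z)
  case (Node a ts)
  then show ?case
    by (cases a) (auto intro!: params_leaves_psubst)
qed

lemma has_par_in_eval_rhs:
  "wf_rhs M k m z \<Longrightarrow> nondeleting_table M k tr \<Longrightarrow> has_par_in Y z \<Longrightarrow> has_par_in Y (eval_rhs tr z)"
proof (induction z)
  case (Node a ts)
  show ?case
  proof (cases a)
    case (Call q i)
    obtain n where n: "n < length ts" "has_par_in Y (ts ! n)"
      using Node.prems Call by (auto simp: in_set_conv_nth)
    have call: "q \<in> states M" "1 \<le> i" "i \<le> k" "length ts = rkQ M q"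
      using Node.prems(1) Call by auto
    have "has_par_in Y (eval_rhs tr (ts ! n))"
      using Node n by (metis nth_mem wf_rhs.simps)
    moreover have "params_leaves (tr q i)" "has_par_in {Suc n} (tr q i)"
      using Node.prems(2) call n unfolding nondeleting_table_def by auto
    ultimately show ?thesis
      using Call n has_par_in_psubst[of "tr q i" "Suc n" "map (eval_rhs tr) ts" Y] by simp
  qed (use Node in auto)
qed

definition child_translations :: "('q, 'p, 'f, 'g) mttr \<Rightarrow> 'f tree list \<Rightarrow> 'q \<Rightarrow> nat \<Rightarrow> ('q, 'g) rlab tree" where
  "child_translations M ss q i = (if 1 \<le> i \<and> i \<le> length ss then translate M (ss ! (i - 1)) q else Node Dollar [])"

lemma translate_Node:
  "translate M (Node \<sigma> ss) q = eval_rhs (child_translations M ss) (rhs M q \<sigma> (map (run M) ss))"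
proof -
  have "child_translations M ss = (\<lambda>q i. if 1 \<le> i \<and> i \<le> length ss
      then (map (translate M) ss ! (i - 1)) q else Node Dollar [])"
    by (auto simp: fun_eq_iff child_translations_def)
  then show ?thesis
    by simp
qed

lemma run_in_lstates: "wf_mttr M \<Longrightarrow> wf_in M s \<Longrightarrow> run M s \<in> lstates M"
proof (induction s)
  case (Node \<sigma> ss)
  then have "set (map (run M) ss) \<subseteq> lstates M" by auto
  with Node.prems show ?case
    unfolding wf_mttr_def valid_la_args_def by auto
qed

lemma valid_la_args_run: "wf_mttr M \<Longrightarrow> wf_in M (Node \<sigma> ss) \<Longrightarrow> valid_la_args M \<sigma> (map (run M) ss)"
  using run_in_lstates unfolding valid_la_args_def by fastforce

lemma wf_rhs_rhs_run:
  "wf_mttr M \<Longrightarrow> wf_in M (Node \<sigma> ss) \<Longrightarrow> q \<in> states M \<Longrightarrow>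
   wf_rhs M (length ss) (rkQ M q) (rhs M q \<sigma> (map (run M) ss))"
  using valid_la_args_run[of M \<sigma> ss] unfolding wf_mttr_def by auto

lemma params_leaves_translate:
  "wf_mttr M \<Longrightarrow> wf_in M s \<Longrightarrow> q \<in> states M \<Longrightarrow> params_leaves (translate M s q)"
proof (induction s arbitrary: q)
  case (Node \<sigma> ss)
  show ?case
    unfolding translate_Node
    by (rule params_leaves_eval_rhs[OF wf_rhs_rhs_run[OF Node.prems]])
      (use Node in \<open>auto simp: child_translations_def\<close>)
qed

lemma occurs_par_iff_has_par_in: "occurs_par j t \<longleftrightarrow> has_par_in {j} t"
  by (induction t) auto

lemma has_par_in_translate:
  assumes "wf_mttr M" and "nondeleting M" and "wf_in M s" and "q \<in> states M"
    and "1 \<le> j" and "j \<le> rkQ M q"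
  shows "has_par_in {j} (translate M s q)"
  using assms
proof (induction s arbitrary: q j)
  case (Node \<sigma> ss)
  have "has_par_in {j} (rhs M q \<sigma> (map (run M) ss))"
    using Node.prems valid_la_args_run[of M \<sigma> ss]
    unfolding nondeleting_def occurs_par_iff_has_par_in[symmetric] by auto
  moreover have "nondeleting_table M (length ss) (child_translations M ss)"
    using Node params_leaves_translate[OF Node.prems(1)]
    by (auto simp: nondeleting_table_def child_translations_def)
  ultimately show ?case
    unfolding translate_Node
    using has_par_in_eval_rhs wf_rhs_rhs_run[OF Node.prems(1,3,4)] by blast
qed

lemma nondeleting_table_child_translations:
  "wf_mttr M \<Longrightarrow> nondeleting M \<Longrightarrow> \<forall>s\<in>set ss. wf_in M s \<Longrightarrow>
   nondeleting_table M (length ss) (child_translations M ss)"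
  using params_leaves_translate has_par_in_translate
  by (fastforce simp: nondeleting_table_def child_translations_def)

lemma wf_rhs_subtree_at: "wf_rhs M k m z \<Longrightarrow> subtree_at z u = Some t \<Longrightarrow> wf_rhs M k m t"
proof (induction z arbitrary: u)
  case (Node a ts)
  show ?case
  proof (cases u)
    case (Cons n v)
    then have "ts ! (n - 1) \<in> set ts" "subtree_at (ts ! (n - 1)) v = Some t"
      using Node.prems(2) by (metis subtree_at_Cons_SomeE)+
    with Node show ?thesis
      by auto
  qed (use Node.prems in \<open>auto simp del: wf_rhs.simps\<close>)
qed

lemma label_at_lcof:
  assumes "label_at (lcof Y z) u = Some a" and "a \<noteq> Dollar"
  shows "\<exists>ts. subtree_at z u = Some (Node a ts) \<and> has_par_in Y (Node a ts) \<and>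
           subtree_at (lcof Y z) u = Some (Node a (map (lcof Y) ts))"
  using assms
proof (induction z arbitrary: u)
  case (Node b ts)
  have "has_par_in Y (Node b ts)"
  proof (rule ccontr)
    assume "\<not> ?thesis"
    then have "lcof Y (Node b ts) = Node Dollar []"
      by (rule lcof_no_par)
    with Node.prems show False
      by (cases u) (auto simp: label_at_def simp del: lcof.simps split: if_splits)
  qed
  then have "lcof Y (Node b ts) = Node b (map (lcof Y) ts)"
    by simp
  with Node show ?case
    by (cases u) (auto simp: label_at_def split: if_splits)
qed

lemma has_par_in_subtree_at: "subtree_at z u = Some t \<Longrightarrow> has_par_in Y t \<Longrightarrow> has_par_in Y z"
proof (induction z arbitrary: u)
  case (Node a ts)
  show ?case
  proof (cases u)
    case (Cons n v)
    then have "ts ! (n - 1) \<in> set ts" "subtree_at (ts ! (n - 1)) v = Some t"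
      using Node.prems(1) by (metis subtree_at_Cons_SomeE)+
    with Node show ?thesis
      by auto
  qed (use Node.prems in simp)
qed

lemma lcof_eval_rhs_in_subtrees:
  assumes "wf_rhs M k m z" and "nondeleting_table M k tr"
    and "subtree_at z u = Some t" and "has_par_in Y t"
  shows "lcof Y (eval_rhs tr t) \<in> subtrees (lcof Y (eval_rhs tr z))"
  using assms
proof (induction z arbitrary: u)
  case (Node a ts)
  show ?case
  proof (cases u)
    case Nil
    with Node.prems show ?thesis
      by (auto simp: self_in_subtrees)
  next
    case (Cons n v)
    then have n: "1 \<le> n" "n \<le> length ts" and t: "subtree_at (ts ! (n - 1)) v = Some t"
      using Node.prems(3) by (metis subtree_at_Cons_SomeE)+
    let ?c = "ts ! (n - 1)"
    have c: "?c \<in> set ts" "wf_rhs M k m ?c"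
      using n Node.prems(1) by auto
    have IH: "lcof Y (eval_rhs tr t) \<in> subtrees (lcof Y (eval_rhs tr ?c))"
      using Node.IH c Node.prems(2,4) t by blast
    have hc: "has_par_in Y (eval_rhs tr ?c)"
      using has_par_in_eval_rhs[OF c(2) Node.prems(2)] has_par_in_subtree_at t Node.prems(4) by blast
    have "lcof Y (eval_rhs tr ?c) \<in> subtrees (lcof Y (eval_rhs tr (Node a ts)))"
    proof (cases a)
      case (Call q i)
      then have "q \<in> states M" "1 \<le> i" "i \<le> k" "length ts = rkQ M q"
        using Node.prems(1) by auto
      then have "params_leaves (tr q i)" "has_par_in {n} (tr q i)"
        using Node.prems(2) n unfolding nondeleting_table_def by auto
      then show ?thesis
        using lcof_arg_in_subtrees_lcof_psubst[of "tr q i" n "map (eval_rhs tr) ts" Y] Call n hc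
        by simp
    next
      case (Out g)
      with hc c(1) have "lcof Y (eval_rhs tr (Node a ts)) = Node a (map (lcof Y \<circ> eval_rhs tr) ts)"
        by auto
      with c(1) show ?thesis
        by (simp add: child_in_subtrees)
    qed (use Node.prems(1) n in auto)
    from this IH show ?thesis
      by (rule subtrees_trans)
  qed
qed

lemma abstracts_lcof_eval_rhs_Call:
  assumes "wf_rhs M k m (Node (Call r i) ts)" and "nondeleting_table M k tr"
    and "1 \<le> l" and "l \<le> length ts" and "has_par_in {y} (ts ! (l - 1))"
  shows "abstracts l (lcof {l} (tr r i)) (lcof {y} (eval_rhs tr (Node (Call r i) ts)))"
proof -
  have call: "r \<in> states M" "1 \<le> i" "i \<le> k"
    using assms(1) by auto
  have "has_par_in {y} (eval_rhs tr (ts ! (l - 1)))"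
    using assms by (intro has_par_in_eval_rhs) auto
  moreover have "params_leaves (tr r i)"
    using assms(2) call unfolding nondeleting_table_def by auto
  ultimately show ?thesis
    using abstracts_lcof_psubst[of "tr r i" l "map (eval_rhs tr) ts" "{y}"] assms(3,4) by simp
qed

lemma abstracts_subtree_lcof_eval_rhs:
  assumes "wf_rhs M k m z" and "nondeleting_table M k tr"
    and "label_at (lcof {y} z) u = Some (Call r i)"
    and "label_at (lcof {y} z) (u @ [l]) \<noteq> Some Dollar"
    and "1 \<le> l" and "l \<le> rkQ M r"
  shows "\<exists>B\<in>subtrees (lcof {y} (eval_rhs tr z)). abstracts l (lcof {l} (tr r i)) B"
proof -
  obtain ts where u: "subtree_at z u = Some (Node (Call r i) ts)"
    and hu: "has_par_in {y} (Node (Call r i) ts)"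
    and lu: "subtree_at (lcof {y} z) u = Some (Node (Call r i) (map (lcof {y}) ts))"
    using label_at_lcof[OF assms(3)] by blast
  have wf: "wf_rhs M k m (Node (Call r i) ts)"
    using wf_rhs_subtree_at[OF assms(1) u] .
  then have "l \<le> length ts"
    using assms(6) by simp
  then have "label_at (lcof {y} z) (u @ [l]) = Some (case lcof {y} (ts ! (l - 1)) of Node a _ \<Rightarrow> a)"
    using lu assms(5) by (simp add: label_at_def subtree_at_append)
  then have "has_par_in {y} (ts ! (l - 1))"
    using assms(4) lcof_no_par by fastforce
  then show ?thesis
    using abstracts_lcof_eval_rhs_Call[OF wf assms(2,5) \<open>l \<le> length ts\<close>]
      lcof_eval_rhs_in_subtrees[OF assms(1,2) u hu] by blast
qed

lemma Lang_Node_with_child: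
  assumes "\<sigma> \<in> inp M" and "rkI M \<sigma> = length ps" and "\<forall>j<length ps. Lang M (ps ! j) \<noteq> {}"
    and "i < length ps" and "s \<in> Lang M (ps ! i)"
  obtains ss where "Node \<sigma> ss \<in> Lang M (la M \<sigma> ps)" and "map (run M) ss = ps" and "ss ! i = s"
proof
  define ss where "ss = (map (\<lambda>j. SOME s. s \<in> Lang M (ps ! j)) [0..<length ps])[i := s]"
  have len: "length ss = length ps"
    by (simp add: ss_def)
  have mem: "ss ! j \<in> Lang M (ps ! j)" if "j < length ps" for j
    using assms(3-5) that by (cases "j = i") (simp_all add: ss_def some_in_eq)
  show run: "map (run M) ss = ps"
    using len mem by (intro nth_equalityI) (simp_all add: Lang_def)
  have "\<forall>t\<in>set ss. wf_in M t"
    using len mem by (simp add: Lang_def all_set_conv_all_nth)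
  then show "Node \<sigma> ss \<in> Lang M (la M \<sigma> ps)"
    using assms(1,2) len run by (simp add: Lang_def)
  show "ss ! i = s"
    using assms(4) by (simp add: ss_def)
qed

lemma abstracts_subtree_pout:
  assumes "wf_mttr M" and "nondeleting M" and "q \<in> states M"
    and "\<sigma> \<in> inp M" and "rkI M \<sigma> = length ps" and "set ps \<subseteq> lstates M"
    and "\<forall>j<length ps. Lang M (ps ! j) \<noteq> {}"
    and "1 \<le> i" and "i \<le> length ps"
    and "label_at (lcof {y} (rhs M q \<sigma> ps)) u = Some (Call r i)"
    and "label_at (lcof {y} (rhs M q \<sigma> ps)) (u @ [l]) \<noteq> Some Dollar"
    and "1 \<le> l" and "l \<le> rkQ M r"
    and "s \<in> Lang M (ps ! (i - 1))"
  shows "\<exists>T\<in>pout M q {y} (la M \<sigma> ps). \<exists>B\<in>subtrees T. abstracts l (lcof {l} (translate M s r)) B"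
proof -
  have "i - 1 < length ps"
    using assms(8,9) by simp
  then obtain ss where ss: "Node \<sigma> ss \<in> Lang M (la M \<sigma> ps)" "map (run M) ss = ps" "ss ! (i - 1) = s"
    using Lang_Node_with_child[OF assms(4,5,7) _ assms(14)] by blast
  then have len: "length ss = length ps"
    by auto
  have "valid_la_args M \<sigma> ps"
    using assms(5,6) unfolding valid_la_args_def by simp
  then have "wf_rhs M (rkI M \<sigma>) (rkQ M q) (rhs M q \<sigma> ps)"
    using assms(1,3,4) unfolding wf_mttr_def by blast
  then have "wf_rhs M (length ps) (rkQ M q) (rhs M q \<sigma> ps)"
    using assms(5) by simp
  moreover have "\<forall>t\<in>set ss. wf_in M t"
    using ss(1) by (simp add: Lang_def)
  then have "nondeleting_table M (length ps) (child_translations M ss)"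
    using nondeleting_table_child_translations[OF assms(1,2)] len by metis
  ultimately obtain B where B: "B \<in> subtrees (lcof {y} (translate M (Node \<sigma> ss) q))"
    and "abstracts l (lcof {l} (child_translations M ss r i)) B"
    using abstracts_subtree_lcof_eval_rhs[OF _ _ assms(10-13)]
    unfolding translate_Node ss(2) by blast
  moreover have "child_translations M ss r i = translate M s r"
    using assms(8,9) ss(3) len by (simp add: child_translations_def)
  ultimately have "abstracts l (lcof {l} (translate M s r)) B"
    by (simp only:)
  with B ss(1) show ?thesis
    unfolding pout_def by blast
qed

theorem mainTheorem1:
  fixes M :: "('q, 'p, 'f, 'g) mttr"
    and q r :: 'q and \<sigma> :: 'f and y i l k :: nat and p :: 'p and ps :: "'p list"
    and u :: "nat list"
  assumes "wf_mttr M"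
    and "nondeleting M"
    and "q \<in> states M"
    and "\<sigma> \<in> inp M" and "rkI M \<sigma> = k" and "k \<ge> 1"
    and "length ps = k" and "set ps \<subseteq> lstates M"
    and "y \<ge> 1"
    and "p = la M \<sigma> ps"
    and "\<forall>j < k. Lang M (ps ! j) \<noteq> {}"
    and "finite (pout M q {y} p)"
    and "1 \<le> i" and "i \<le> k" and "r \<in> states M"
    and "label_at (lcof {y} (rhs M q \<sigma> ps)) u = Some (Call r i)"
    and "1 \<le> l" and "l \<le> rkQ M r"
    and "label_at (lcof {y} (rhs M q \<sigma> ps)) (u @ [l]) \<noteq> Some Dollar"
  shows "finite (pout M r {l} (ps ! (i - 1)))"
proof (rule finite_if_abstracts_subtree[OF assms(12)])
  fix A
  assume "A \<in> pout M r {l} (ps ! (i - 1))"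
  then obtain s where "s \<in> Lang M (ps ! (i - 1))" and "A = lcof {l} (translate M s r)"
    unfolding pout_def by blast
  then show "\<exists>T\<in>pout M q {y} p. \<exists>B\<in>subtrees T. abstracts l A B"
    using abstracts_subtree_pout[of M q \<sigma> ps i y u r l] assms by simp
qed

end
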